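(* Let $\Lambda_1,\ldots,\Lambda_d\in\mathcal{M}_2$ and let $C$ be a $d$-copula. For a $d$-copula $D$, bivariate tail dependence functions $\Xi_1,\dots,\Xi_d$, $w_0\in\mathbb{R}_+$ and $\mathbf{w}=(w_1,\dots,w_d)\in\mathbb{R}_+^d$ write $$\phi_D^{w_0}(\Xi_1,\ldots,\Xi_d)(\mathbf{w}):=\int_0^{w_0}D\big(\partial_1\Xi_1(t,w_1),\ldots,\partial_1\Xi_d(t,w_d)\big)\,dt,\qquad \phi_D(\Xi_1,\ldots,\Xi_d)(\mathbf{w}):=\int_0^{\infty}D\big(\partial_1\Xi_1(t,w_1),\ldots,\partial_1\Xi_d(t,w_d)\big)\,dt.$$ Then: (1) If $C_n$ are $d$-copulas with $C_n\to C$ pointwise, then $\phi_{C_n}^{w_0}(\Lambda_1,\ldots,\Lambda_d)\to\phi_C^{w_0}(\Lambda_1,\ldots,\Lambda_d)$ pointwise (for every $w_0\in\mathbb{R}_+$). (2) If $\Lambda_i^n\in\mathcal{M}_2$ with $\Lambda_i^n\to\Lambda_i$ pointwise for each $i$, then $\phi_C^{w_0}(\Lambda_1^n,\ldots,\Lambda_d^n)\to\phi_C^{w_0}(\Lambda_1,\ldots,\Lambda_d)$ pointwise (for every $w_0\in\mathbb{R}_+$). (3) If $\Lambda_i^n\in\mathcal{M}_2$ with $\|\partial_1\Lambda_i^n(\cdot,w)-\partial_1\Lambda_i(\cdot,w)\|_{L^1(\mathbb{R}_+)}\to0$ (for all $w\in\mathbb{R}_+$ and each $i$), then $\phi_C(\Lambda_1^n,\ldots,\Lambda_d^n)\to\phi_C(\Lambda_1,\ldots,\Lambda_d)$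 pointwise.
   Context: A $d$-copula is a distribution function on $[0,1]^d$ with uniform univariate margins. For a $d$-copula $C$, its tail dependence function is $\Lambda(\mathbf{w};C):=\lim_{s\searrow0}C(s\mathbf{w})/s$, $\mathbf{w}\in\mathbb{R}_+^d$, $\mathbb{R}_+=[0,\infty)$, provided the limit exists for all $\mathbf{w}$; $\mathcal{M}_d$ denotes the set of $d$-variate tail dependence functions. Elements of $\mathcal{M}_2$ are concave, $1$-Lipschitz, and have almost everywhere defined partial derivatives with values in $[0,1]$. *)

theory Defs
  imports "HOL-Probability.Probability"
begin

definition unit_cube :: "real^'d \<Rightarrow> bool" where
  "unit_cube u \<longleftrightarrow> (\<forall>i. 0 \<le> u $ i \<and> u $ i \<le> 1)"

definition nonneg_vec :: "real^'d \<Rightarrow> bool" where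
  "nonneg_vec w \<longleftrightarrow> (\<forall>i. 0 \<le> w $ i)"

definition copula :: "(real^'d \<Rightarrow> real) \<Rightarrow> bool" where
  "copula C \<longleftrightarrow> (\<exists>M. prob_space M \<and> sets M = sets (borel :: (real^'d) measure) \<and>
     (\<forall>i t. 0 \<le> t \<and> t \<le> 1 \<longrightarrow> measure M {x \<in> space M. x $ i \<le> t} = t) \<and>
     (\<forall>u. unit_cube u \<longrightarrow> C u = measure M {x \<in> space M. \<forall>i. x $ i \<le> u $ i}))"

text \<open>Bivariate tail dependence functions (the class M_2), written in curried form
  Lambda t w = Lambda((t,w)); only values on R_+^2 are meaningful.\<close>
definition M2 :: "(real \<Rightarrow> real \<Rightarrow> real) set" where
  "M2 = {L. \<exists>C :: real^2 \<Rightarrow> real. copula C \<and>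
      (\<forall>t w. 0 \<le> t \<and> 0 \<le> w \<longrightarrow>
         ((\<lambda>s. C (vector [s * t, s * w]) / s) \<longlongrightarrow> L t w) (at_right 0))}"

text \<open>Partial derivative in the first argument (defined a.e.; set to 0 where
  the derivative does not exist, which does not affect any integral below).\<close>
definition part1 :: "(real \<Rightarrow> real \<Rightarrow> real) \<Rightarrow> real \<Rightarrow> real \<Rightarrow> real" where
  "part1 L t w = (if (\<lambda>s. L s w) differentiable (at t) then deriv (\<lambda>s. L s w) t else 0)"

definition phi_fin :: "(real^'d \<Rightarrow> real) \<Rightarrow> real \<Rightarrow> ('d \<Rightarrow> real \<Rightarrow> real \<Rightarrow> real) \<Rightarrow> real^'d \<Rightarrow> real" where
  "phi_fin D w0 Xi w = integral {0..w0} (\<lambda>t. D (\<chi> i. part1 (Xi i) t (w $ i)))"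

definition phi_inf :: "(real^'d \<Rightarrow> real) \<Rightarrow> ('d \<Rightarrow> real \<Rightarrow> real \<Rightarrow> real) \<Rightarrow> real^'d \<Rightarrow> real" where
  "phi_inf D Xi w = integral {0..} (\<lambda>t. D (\<chi> i. part1 (Xi i) t (w $ i)))"

end

theory Submission
  imports Defs
begin

text \<open>All three integrands take values in [0,1], and a copula is 1-Lipschitz for the l1 norm on
  the unit cube. Hence (1) and (2) follow by dominated convergence on [0, w0] once the integrands
  converge almost everywhere, and (3) follows from the pointwise bound
  |C(u) - C(v)| \<le> \<Sum>i |u_i - v_i|. Almost everywhere convergence in (2) comes from concavity:
  homogeneity and 2-increasingness of a tail dependence function make t \<mapsto> \<Lambda>(t,w)
  concave with respect to geometric midpoints, hence concave on (0,\<infinity>) by continuity.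
  Right derivatives of concave functions are monotone, so off a countable set they are
  continuous and equal to the derivative, and pointwise convergence of concave functions
  forces convergence of the right derivatives at every such point.\<close>

section \<open>Concavity from geometric midpoint concavity\<close>

definition geometric_interpolation :: "real \<Rightarrow> real \<Rightarrow> real \<Rightarrow> real" where
  "geometric_interpolation x z s = x * (z / x) powr s"

context
  fixes x z :: real
  assumes xz: "0 < x" "x < z"
begin

lemma geometric_interpolation_0_1:
  "geometric_interpolation x z 0 = x" "geometric_interpolation x z 1 = z"
  using xz by (simp_all add: geometric_interpolation_def)

lemma geometric_interpolation_strict_mono:
  "a < b \<Longrightarrow> geometric_interpolation x z a < geometric_interpolation x z b"
  using xz by (simp add: geometric_interpolation_def)

lemma geometric_interpolation_mem:
  "s \<in> {0..1} \<Longrightarrow> geometric_interpolation x z s \<in> {x..z}"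
  using geometric_interpolation_strict_mono[of 0 s] geometric_interpolation_strict_mono[of s 1]
    geometric_interpolation_0_1
  by (cases "s = 0"; cases "s = 1") auto

lemma geometric_interpolation_midpoint:
  "sqrt (geometric_interpolation x z a * geometric_interpolation x z b)
    = geometric_interpolation x z ((a + b) / 2)"
proof -
  have "geometric_interpolation x z a * geometric_interpolation x z b
      = geometric_interpolation x z ((a + b) / 2) * geometric_interpolation x z ((a + b) / 2)"
    by (simp add: geometric_interpolation_def algebra_simps flip: powr_add)
  moreover have "0 < geometric_interpolation x z ((a + b) / 2)"
    using xz by (simp add: geometric_interpolation_def)
  ultimately show ?thesis by simp
qed

lemma geometric_interpolation_log:
  "0 < y \<Longrightarrow> geometric_interpolation x z (log (z / x) (y / x)) = y"
  using xz by (simp add: geometric_interpolation_def)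

lemma continuous_on_geometric_interpolation: "continuous_on S (geometric_interpolation x z)"
  using xz unfolding geometric_interpolation_def by (intro continuous_intros) auto

lemma nonneg_at_dyadics_if_geometric_midpoint_nonneg:
  fixes g :: "real \<Rightarrow> real"
  assumes "0 \<le> g x" "0 \<le> g z"
    and mid: "\<And>p q. x \<le> p \<Longrightarrow> p < q \<Longrightarrow> q \<le> z \<Longrightarrow> 0 \<le> g p \<Longrightarrow> 0 \<le> g q \<Longrightarrow> 0 \<le> g (sqrt (p * q))"
  shows "m \<le> 2 ^ k \<Longrightarrow> 0 \<le> g (geometric_interpolation x z (real m / 2 ^ k))"
proof (induction k arbitrary: m)
  case 0
  then have "m = 0 \<or> m = 1" by auto
  then show ?case using geometric_interpolation_0_1 assms(1,2) by auto
next
  case (Suc k)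
  show ?case
  proof (cases "even m")
    case True
    then obtain i where "m = 2 * i" by blast
    then show ?thesis using Suc by simp
  next
    case False
    then obtain i where i: "m = 2 * i + 1" using oddE by blast
    define a where "a = real i / 2 ^ k"
    define b where "b = real (i + 1) / 2 ^ k"
    have "i < 2 ^ k" using Suc.prems i by simp
    then have "real (i + 1) \<le> 2 ^ k"
      by (metis Suc_eq_plus1 Suc_leI of_nat_le_iff of_nat_numeral of_nat_power)
    then have ab: "0 \<le> a" "a < b" "b \<le> 1"
      unfolding a_def b_def by (simp_all add: divide_right_mono field_simps)
    have "real m / 2 ^ Suc k = (a + b) / 2"
      unfolding a_def b_def i by (simp add: field_simps)
    then have "geometric_interpolation x z (real m / 2 ^ Suc k)
        = sqrt (geometric_interpolation x z a * geometric_interpolation x z b)"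
      by (simp only: geometric_interpolation_midpoint)
    moreover have "0 \<le> g (geometric_interpolation x z a)" "0 \<le> g (geometric_interpolation x z b)"
      using Suc.IH[of i] Suc.IH[of "i + 1"] \<open>i < 2 ^ k\<close> unfolding a_def b_def by simp_all
    moreover have "x \<le> geometric_interpolation x z a" "geometric_interpolation x z b \<le> z"
      using geometric_interpolation_mem ab by auto
    ultimately show ?thesis
      using mid geometric_interpolation_strict_mono[OF ab(2)] by simp
  qed
qed

lemma nonneg_if_geometric_midpoint_nonneg:
  fixes g :: "real \<Rightarrow> real"
  assumes "continuous_on {x..z} g" "0 \<le> g x" "0 \<le> g z"
    and mid: "\<And>p q. x \<le> p \<Longrightarrow> p < q \<Longrightarrow> q \<le> z \<Longrightarrow> 0 \<le> g p \<Longrightarrow> 0 \<le> g q \<Longrightarrow> 0 \<le> g (sqrt (p * q))"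
    and y: "y \<in> {x..z}"
  shows "0 \<le> g y"
proof -
  define S where "S = {0..1} \<inter> (\<Union>k m. {real m / 2 ^ k :: real})"
  have closure_S: "closure S = {0..1}"
    unfolding S_def by (subst closure_dyadic_rationals_in_convex_set_pos_1) auto
  have "continuous_on {0..1} (\<lambda>s. g (geometric_interpolation x z s))"
    using geometric_interpolation_mem
    by (intro continuous_on_compose2[OF assms(1) continuous_on_geometric_interpolation]) auto
  then have nonneg: "0 \<le> g (geometric_interpolation x z s)" if "s \<in> {0..1}" for s
  proof (rule continuous_ge_on_closure[where S = S, unfolded closure_S, OF _ that])
    fix s assume "s \<in> S"
    then obtain k m where s: "s = real m / 2 ^ k" "s \<le> 1" unfolding S_def by auto
    then have "m \<le> 2 ^ k" by (simp add: divide_le_eq)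
    with nonneg_at_dyadics_if_geometric_midpoint_nonneg[OF assms(2,3) mid]
    show "0 \<le> g (geometric_interpolation x z s)" unfolding s(1) by blast
  qed
  have "log (z / x) (y / x) \<in> {0..1}"
    using xz y by (auto simp: divide_right_mono)
  from nonneg[OF this] show ?thesis
    using xz y by (simp add: geometric_interpolation_log)
qed

end

lemma concave_on_if_geometric_midpoint:
  fixes f :: "real \<Rightarrow> real"
  assumes cont: "continuous_on {0<..} f"
    and mid: "\<And>p q. 0 < p \<Longrightarrow> p < q \<Longrightarrow>
      (q - sqrt (p * q)) * f p + (sqrt (p * q) - p) * f q \<le> (q - p) * f (sqrt (p * q))"
  shows "concave_on {0<..} f"
proof (rule concave_on_linorderI)
  fix t x z :: real
  assume t: "0 < t" "t < 1" and xz: "x \<in> {0<..}" "z \<in> {0<..}" "x < z"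
  define K where "K = (f z - f x) / (z - x)"
  define chord where "chord u = f x + (u - x) * K" for u
  define g where "g u = f u - chord u" for u
  have "0 \<le> g ((1 - t) *\<^sub>R x + t *\<^sub>R z)"
  proof (rule nonneg_if_geometric_midpoint_nonneg[where g = g and x = x and z = z])
    show "continuous_on {x..z} g"
      unfolding g_def chord_def using xz
      by (intro continuous_intros continuous_on_subset[OF cont]) auto
    show "0 \<le> g x" "0 \<le> g z" using xz by (simp_all add: g_def chord_def K_def)
    have "(1 - t) *\<^sub>R x + t *\<^sub>R z = x + t * (z - x)" by (simp add: algebra_simps)
    moreover have "0 \<le> t * (z - x)" "t * (z - x) \<le> z - x"
      using t xz by (simp_all add: mult_left_le_one_le)
    ultimately show "(1 - t) *\<^sub>R x + t *\<^sub>R z \<in> {x..z}" by simp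
  next
    fix p q assume pq: "x \<le> p" "p < q" "q \<le> z" "0 \<le> g p" "0 \<le> g q"
    define m where "m = sqrt (p * q)"
    have "p * p < p * q" "p * q < q * q"
      using pq xz by (simp_all add: mult_strict_left_mono mult_strict_right_mono)
    then have "sqrt (p * p) < m" "m < sqrt (q * q)" unfolding m_def by (simp_all only: real_sqrt_less_iff)
    then have m: "p < m" "m < q" using pq xz by simp_all
    have affine: "(q - m) * chord p + (m - p) * chord q = (q - p) * chord m"
      by (simp add: chord_def algebra_simps)
    have "(q - m) * g p + (m - p) * g q \<le> (q - p) * g m"
      using mid[of p q] pq xz affine unfolding g_def m_def by (simp add: algebra_simps)
    moreover have "0 \<le> (q - m) * g p + (m - p) * g q" using m pq by simp
    ultimately have "0 \<le> (q - p) * g m" by linarith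
    then show "0 \<le> g (sqrt (p * q))" using pq unfolding m_def by (simp add: zero_le_mult_iff)
  qed (use xz in auto)
  moreover have "chord ((1 - t) *\<^sub>R x + t *\<^sub>R z) = (1 - t) * f x + t * f z"
    using xz by (simp add: chord_def K_def field_simps)
  ultimately show "(1 - t) * f x + t * f z \<le> f ((1 - t) *\<^sub>R x + t *\<^sub>R z)"
    by (simp add: g_def)
qed (simp add: convex_real_interval)

section \<open>Right derivatives of concave functions\<close>

text \<open>For concave f the difference quotients increase as h decreases to 0, so this supremum
  is the right derivative.\<close>
definition right_deriv :: "(real \<Rightarrow> real) \<Rightarrow> real \<Rightarrow> real" where
  "right_deriv f t = (SUP h\<in>{0<..}. (f (t + h) - f t) / h)"

definition pos_deriv :: "(real \<Rightarrow> real) \<Rightarrow> real \<Rightarrow> real" where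
  "pos_deriv f t = (if 0 < t \<and> f differentiable (at t) then deriv f t else 0)"

locale concave_unit_slope =
  fixes f :: "real \<Rightarrow> real"
  assumes concave: "concave_on {0<..} f"
    and increment_bounds: "\<And>a b. 0 < a \<Longrightarrow> a \<le> b \<Longrightarrow> 0 \<le> f b - f a \<and> f b - f a \<le> b - a"
begin

lemma secant_slope_le:
  assumes "0 < x" "x < y" "y < z"
  shows "(f z - f x) / (z - x) \<le> (f y - f x) / (y - x)"
    and "(f z - f y) / (z - y) \<le> (f z - f x) / (z - x)"
proof -
  have flip: "c / (a - b) = - (c / (b - a))" for a b c :: real
    by (metis divide_minus_right minus_diff_eq)
  have "convex_on {0<..} (\<lambda>x. - f x)" using concave by (simp add: concave_on_def)
  from convex_on_slope_le[OF this, of x z y] assms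
  have "(f y - f x) / (x - y) \<le> (f z - f x) / (x - z)" "(f z - f x) / (x - z) \<le> (f z - f y) / (y - z)"
    by simp_all
  moreover note flip[where a = x and b = y] flip[where a = x and b = z] flip[where a = y and b = z]
  ultimately show "(f z - f x) / (z - x) \<le> (f y - f x) / (y - x)"
    and "(f z - f y) / (z - y) \<le> (f z - f x) / (z - x)"
    by simp_all
qed

lemma secant_slope_antimono:
  assumes "0 < x" "x < y" "y < z"
  shows "(f z - f y) / (z - y) \<le> (f y - f x) / (y - x)"
  using secant_slope_le[OF assms] by linarith

lemma difference_quotient_bounds:
  assumes "0 < t" "0 < h"
  shows "0 \<le> (f (t + h) - f t) / h \<and> (f (t + h) - f t) / h \<le> 1"
  using increment_bounds[of t "t + h"] assms by auto

lemma bdd_above_difference_quotients: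
  "0 < t \<Longrightarrow> bdd_above ((\<lambda>h. (f (t + h) - f t) / h) ` {0<..})"
  using difference_quotient_bounds[of t] by (intro bdd_aboveI[of _ 1]) force

lemma difference_quotient_le_right_deriv:
  "0 < t \<Longrightarrow> 0 < h \<Longrightarrow> (f (t + h) - f t) / h \<le> right_deriv f t"
  unfolding right_deriv_def by (rule cSUP_upper[OF _ bdd_above_difference_quotients]) auto

lemma right_deriv_bounds:
  assumes "0 < t"
  shows "0 \<le> right_deriv f t \<and> right_deriv f t \<le> 1"
proof
  show "0 \<le> right_deriv f t"
    using difference_quotient_le_right_deriv[OF assms, of 1] difference_quotient_bounds[OF assms, of 1]
    by simp
  show "right_deriv f t \<le> 1"
    unfolding right_deriv_def using difference_quotient_bounds[OF assms] by (intro cSUP_least) auto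
qed

lemma right_deriv_le_secant_slope:
  assumes "0 < s" "s < t"
  shows "right_deriv f t \<le> (f t - f s) / (t - s)"
  unfolding right_deriv_def
proof (rule cSUP_least)
  fix h :: real assume "h \<in> {0<..}"
  then show "(f (t + h) - f t) / h \<le> (f t - f s) / (t - s)"
    using secant_slope_antimono[OF assms, of "t + h"] by simp
qed auto

lemma right_deriv_antimono:
  "0 < s \<Longrightarrow> s \<le> t \<Longrightarrow> right_deriv f t \<le> right_deriv f s"
  using right_deriv_le_secant_slope[of s t] difference_quotient_le_right_deriv[of s "t - s"]
  by (cases "s = t") auto

lemma tendsto_right_deriv:
  assumes "0 < t"
  shows "((\<lambda>h. (f (t + h) - f t) / h) \<longlongrightarrow> right_deriv f t) (at_right 0)"
proof (rule order_tendstoI)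
  fix a assume "a < right_deriv f t"
  then obtain h0 where h0: "0 < h0" "a < (f (t + h0) - f t) / h0"
    unfolding right_deriv_def
    using less_cSUP_iff[OF _ bdd_above_difference_quotients[OF assms], of a] by auto
  have "a < (f (t + h) - f t) / h" if "0 < h" "h < h0" for h
    using secant_slope_le(1)[OF assms, of "t + h" "t + h0"] h0 that by simp
  then show "\<forall>\<^sub>F h in at_right 0. a < (f (t + h) - f t) / h"
    using h0 by (auto simp: eventually_at_right_field)
next
  fix a assume a: "right_deriv f t < a"
  show "\<forall>\<^sub>F h in at_right 0. (f (t + h) - f t) / h < a"
    using eventually_at_right_less[of 0]
    by (rule eventually_mono) (use difference_quotient_le_right_deriv[OF assms] a in force)
qed

lemma left_difference_quotient_bounds:
  assumes "0 < t" "h < 0" "- t < h"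
  shows "right_deriv f t \<le> (f (t + h) - f t) / h \<and> (f (t + h) - f t) / h \<le> right_deriv f (t + h)"
proof -
  have "(f (t + h) - f t) / h = (f t - f (t + h)) / (t - (t + h))"
    by (simp add: minus_divide_left)
  then show ?thesis
    using right_deriv_le_secant_slope[of "t + h" t] difference_quotient_le_right_deriv[of "t + h" "- h"] assms
    by simp
qed

lemma has_real_derivative_right_deriv:
  assumes "0 < t" "isCont (right_deriv f) t"
  shows "(f has_real_derivative right_deriv f t) (at t)"
  unfolding DERIV_def
proof (rule filterlim_split_at)
  show "((\<lambda>h. (f (t + h) - f t) / h) \<longlongrightarrow> right_deriv f t) (at_right 0)"
    by (rule tendsto_right_deriv[OF assms(1)])
  have right_deriv_left: "((\<lambda>h. right_deriv f (t + h)) \<longlongrightarrow> right_deriv f t) (at_left 0)"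
    using assms(2) unfolding isCont_iff by (rule tendsto_mono[OF at_le, rotated]) simp
  have "\<forall>\<^sub>F h in at_left 0. right_deriv f t \<le> (f (t + h) - f t) / h
      \<and> (f (t + h) - f t) / h \<le> right_deriv f (t + h)"
    unfolding eventually_at_left_field
    using assms(1) left_difference_quotient_bounds[OF assms(1)] by (intro exI[of _ "- t"]) simp
  then show "((\<lambda>h. (f (t + h) - f t) / h) \<longlongrightarrow> right_deriv f t) (at_left 0)"
    by (intro tendsto_sandwich[OF _ _ tendsto_const right_deriv_left]) (simp_all add: eventually_conj_iff)
qed

lemma deriv_eq_right_deriv:
  assumes "0 < t" "f differentiable (at t)"
  shows "deriv f t = right_deriv f t"
proof -
  have "((\<lambda>h. (f (t + h) - f t) / h) \<longlongrightarrow> deriv f t) (at 0)"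
    using assms(2) by (simp add: DERIV_deriv_iff_real_differentiable flip: DERIV_def)
  then have "((\<lambda>h. (f (t + h) - f t) / h) \<longlongrightarrow> deriv f t) (at_right 0)"
    by (rule tendsto_mono[OF at_le, rotated]) simp
  from tendsto_unique[OF trivial_limit_at_right_real this tendsto_right_deriv[OF assms(1)]]
  show ?thesis .
qed

lemma countable_discontinuities_right_deriv:
  "countable {t \<in> {0<..}. \<not> isCont (right_deriv f) t}"
proof -
  have "mono_on {0<..} (\<lambda>t. - right_deriv f t)"
    by (intro mono_onI) (auto dest: right_deriv_antimono)
  then have "countable {t \<in> {0<..}. \<not> isCont (\<lambda>t. - right_deriv f t) t}"
    by (intro mono_on_ctble_discont_open) auto
  moreover have "isCont (\<lambda>t. - right_deriv f t) t \<longleftrightarrow> isCont (right_deriv f) t" for t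
    using continuous_minus[of "at t" "\<lambda>t. - right_deriv f t"] continuous_minus[of "at t" "right_deriv f"]
    by auto
  ultimately show ?thesis by simp
qed

lemma pos_deriv_eq_right_deriv:
  "0 < t \<Longrightarrow> isCont (right_deriv f) t \<Longrightarrow> pos_deriv f t = right_deriv f t"
  using has_real_derivative_right_deriv[of t] deriv_eq_right_deriv[of t]
  unfolding pos_deriv_def real_differentiable_def by auto

lemma pos_deriv_bounds: "0 \<le> pos_deriv f t \<and> pos_deriv f t \<le> 1"
  using deriv_eq_right_deriv[of t] right_deriv_bounds[of t] unfolding pos_deriv_def by auto

lemma borel_measurable_pos_deriv: "pos_deriv f \<in> borel_measurable borel"
proof -
  define g where "g t = (if 0 < t then right_deriv f t else 1)" for t
  have "mono (\<lambda>t. - g t)"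
  proof (rule monoI)
    fix s t :: real assume "s \<le> t"
    then show "- g s \<le> - g t"
      using right_deriv_antimono[of s t] right_deriv_bounds[of t] unfolding g_def by auto
  qed
  then have "(\<lambda>t. - (- g t)) \<in> borel_measurable borel"
    by (intro borel_measurable_uminus borel_measurable_mono)
  then have "(\<lambda>t. if 0 < t then g t else 0) \<in> borel_measurable borel" by simp
  then show ?thesis
  proof (rule measurable_discrete_difference[OF _ countable_discontinuities_right_deriv])
    fix t assume "t \<notin> {t \<in> {0<..}. \<not> isCont (right_deriv f) t}"
    then show "(if 0 < t then g t else 0) = pos_deriv f t"
      using pos_deriv_eq_right_deriv[of t] unfolding g_def pos_deriv_def by auto
  qed auto
qed

lemma tendsto_right_deriv_sequence:
  assumes fs: "\<And>n. concave_unit_slope (fs n)"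
    and lim: "\<And>s. 0 < s \<Longrightarrow> (\<lambda>n. fs n s) \<longlonglongrightarrow> f s"
    and t: "0 < t" and diff: "f differentiable (at t)"
  shows "(\<lambda>n. right_deriv (fs n) t) \<longlonglongrightarrow> right_deriv f t"
proof (rule order_tendstoI)
  fix a assume "a < right_deriv f t"
  from order_tendstoD(1)[OF tendsto_right_deriv[OF t] this]
  obtain b where "0 < b" "\<And>h. 0 < h \<Longrightarrow> h < b \<Longrightarrow> a < (f (t + h) - f t) / h"
    unfolding eventually_at_right_field by auto
  then obtain h where h: "0 < h" "a < (f (t + h) - f t) / h" by (meson field_lbound_gt_zero less_le)
  have "(\<lambda>n. (fs n (t + h) - fs n t) / h) \<longlonglongrightarrow> (f (t + h) - f t) / h"
    using t h by (intro tendsto_intros lim) auto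
  from order_tendstoD(1)[OF this h(2)]
  show "\<forall>\<^sub>F n in sequentially. a < right_deriv (fs n) t"
    by (rule eventually_mono)
      (use concave_unit_slope.difference_quotient_le_right_deriv[OF fs t h(1)] in \<open>fastforce intro: less_le_trans\<close>)
next
  fix a assume "right_deriv f t < a"
  have "((\<lambda>h. (f (t + h) - f t) / h) \<longlongrightarrow> right_deriv f t) (at 0)"
    using diff deriv_eq_right_deriv[OF t diff]
    by (simp add: DERIV_deriv_iff_real_differentiable[symmetric] DERIV_def)
  then have "((\<lambda>h. (f (t + h) - f t) / h) \<longlongrightarrow> right_deriv f t) (at_left 0)"
    by (rule tendsto_mono[OF at_le, rotated]) simp
  from order_tendstoD(2)[OF this \<open>right_deriv f t < a\<close>]
  obtain b where "b < 0" "\<And>h. b < h \<Longrightarrow> h < 0 \<Longrightarrow> (f (t + h) - f t) / h < a"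
    unfolding eventually_at_left_field by auto
  then obtain h where h: "h < 0" "- t < h" "(f (t + h) - f t) / h < a"
    using t by (intro that[of "max (b / 2) (- t / 2)"]) auto
  have "(\<lambda>n. (fs n (t + h) - fs n t) / h) \<longlonglongrightarrow> (f (t + h) - f t) / h"
    using t h by (intro tendsto_intros lim) auto
  from order_tendstoD(2)[OF this h(3)]
  show "\<forall>\<^sub>F n in sequentially. right_deriv (fs n) t < a"
    by (rule eventually_mono)
      (use concave_unit_slope.left_difference_quotient_bounds[OF fs t h(1,2)] in \<open>fastforce intro: le_less_trans\<close>)
qed

end

lemma borel_measurable_vec_lambda:
  assumes "\<And>i. g i \<in> borel_measurable M"
  shows "(\<lambda>t. (\<chi> i. g i t) :: real^'d) \<in> borel_measurable M"
proof (rule borel_measurable_euclidean_space[THEN iffD2], intro ballI)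
  fix b :: "real^'d" assume "b \<in> Basis"
  then obtain i where "b = axis i 1" unfolding Basis_vec_def by auto
  then show "(\<lambda>t. (\<chi> i. g i t) \<bullet> b) \<in> borel_measurable M" using assms[of i] by (simp add: inner_axis)
qed

lemma borel_measurable_lebesgueI:
  "f \<in> borel_measurable borel \<Longrightarrow> f \<in> borel_measurable (lebesgue :: real measure)"
  by (rule measurable_completion) (simp only: measurable_lborel2)

text \<open>If h is not integrable on S then neither is g, and both integrals are 0.\<close>
lemma norm_integral_diff_le:
  fixes g h :: "'a::euclidean_space \<Rightarrow> real"
  assumes "(\<lambda>t. g t - h t) integrable_on S" "norm (integral S (\<lambda>t. g t - h t)) \<le> e"
  shows "norm (integral S g - integral S h) \<le> e"
proof (cases "h integrable_on S")
  case True
  with integrable_add[OF True assms(1)] have "g integrable_on S" by simp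
  with True assms(2) show ?thesis by (simp add: integral_diff)
next
  case False
  with integrable_diff[OF _ assms(1), of g] have "\<not> g integrable_on S" by auto
  with False assms(2) show ?thesis by (simp add: not_integrable_integral)
qed

lemma norm_integral_diff_le_L1_norm:
  fixes g h :: "'a::euclidean_space \<Rightarrow> real"
  assumes S: "S \<in> sets lebesgue" and meas: "g \<in> borel_measurable lebesgue" "h \<in> borel_measurable lebesgue"
    and finite: "(\<integral>\<^sup>+ t \<in> S. ennreal \<bar>g t - h t\<bar> \<partial>lebesgue) < \<infinity>"
  shows "norm (integral S g - integral S h) \<le> enn2real (\<integral>\<^sup>+ t \<in> S. ennreal \<bar>g t - h t\<bar> \<partial>lebesgue)"
proof (rule norm_integral_diff_le)
  define d where "d t = indicator S t *\<^sub>R (g t - h t)" for t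
  have d_meas: "d \<in> borel_measurable lebesgue"
    unfolding d_def[abs_def] using S meas
    by (intro borel_measurable_scaleR borel_measurable_indicator borel_measurable_diff)
  have L1_norm: "(\<integral>\<^sup>+ t. ennreal (norm (d t)) \<partial>lebesgue) = (\<integral>\<^sup>+ t \<in> S. ennreal \<bar>g t - h t\<bar> \<partial>lebesgue)"
    unfolding d_def by (intro nn_integral_cong) (simp add: indicator_def)
  have "integrable lebesgue d"
    using d_meas finite unfolding L1_norm[symmetric] by (rule integrableI_bounded)
  then have int: "set_integrable lebesgue S (\<lambda>t. g t - h t)"
    unfolding set_integrable_def d_def .
  show "(\<lambda>t. g t - h t) integrable_on S"
    by (rule set_lebesgue_integral_eq_integral(1)[OF int])
  have "norm (integral\<^sup>L lebesgue d) \<le> integral\<^sup>L lebesgue (\<lambda>t. norm (d t))"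
    by (rule integral_norm_bound)
  also have "\<dots> = enn2real (\<integral>\<^sup>+ t \<in> S. ennreal \<bar>g t - h t\<bar> \<partial>lebesgue)"
    unfolding L1_norm[symmetric] using d_meas
    by (intro integral_eq_nn_integral borel_measurable_norm AE_I2) auto
  finally show "norm (integral S (\<lambda>t. g t - h t)) \<le> enn2real (\<integral>\<^sup>+ t \<in> S. ennreal \<bar>g t - h t\<bar> \<partial>lebesgue)"
    using set_lebesgue_integral_eq_integral(2)[OF int]
    unfolding set_lebesgue_integral_def d_def by simp
qed

lemma tendsto_integral_if_L1_tendsto:
  fixes g :: "nat \<Rightarrow> 'a::euclidean_space \<Rightarrow> real"
  assumes S: "S \<in> sets lebesgue"
    and meas: "\<And>n. g n \<in> borel_measurable lebesgue" "g0 \<in> borel_measurable lebesgue"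
    and L1: "(\<lambda>n. \<integral>\<^sup>+ t \<in> S. ennreal \<bar>g n t - g0 t\<bar> \<partial>lebesgue) \<longlonglongrightarrow> 0"
  shows "(\<lambda>n. integral S (g n)) \<longlonglongrightarrow> integral S g0"
proof -
  define e where "e n = (\<integral>\<^sup>+ t \<in> S. ennreal \<bar>g n t - g0 t\<bar> \<partial>lebesgue)" for n
  have "\<forall>\<^sub>F n in sequentially. e n < 1"
    using L1 unfolding e_def[abs_def] by (rule order_tendstoD) simp
  then have "\<forall>\<^sub>F n in sequentially. e n < \<infinity>"
    by (rule eventually_mono) (erule order.strict_trans, simp)
  then have "\<forall>\<^sub>F n in sequentially. norm (integral S (g n) - integral S g0) \<le> enn2real (e n)"
    by (rule eventually_mono) (unfold e_def, rule norm_integral_diff_le_L1_norm[OF S meas])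
  moreover have "(\<lambda>n. enn2real (e n)) \<longlonglongrightarrow> 0"
    using tendsto_enn2real[of e 0] L1 unfolding e_def[abs_def] by simp
  ultimately have "(\<lambda>n. integral S (g n) - integral S g0) \<longlonglongrightarrow> 0"
    by (rule Lim_null_comparison)
  then show ?thesis by (rule LIM_zero_cancel)
qed

section \<open>Copulas and tail dependence functions\<close>

lemma copulaE:
  fixes C :: "real^'d \<Rightarrow> real"
  assumes "copula C"
  obtains M where "prob_space M" "sets M = sets (borel :: (real^'d) measure)"
    "\<And>i t. 0 \<le> t \<Longrightarrow> t \<le> 1 \<Longrightarrow> measure M {x. x $ i \<le> t} = t"
    "\<And>u. unit_cube u \<Longrightarrow> C u = measure M {x. \<forall>i. x $ i \<le> u $ i}"
proof -
  obtain M where M: "prob_space M" "sets M = sets (borel :: (real^'d) measure)"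
    "\<forall>i t. 0 \<le> t \<and> t \<le> 1 \<longrightarrow> measure M {x \<in> space M. x $ i \<le> t} = t"
    "\<forall>u. unit_cube u \<longrightarrow> C u = measure M {x \<in> space M. \<forall>i. x $ i \<le> u $ i}"
    using assms unfolding copula_def by blast
  have "space M = UNIV" using sets_eq_imp_space_eq[OF M(2)] by simp
  with M show ?thesis by (intro that) auto
qed

lemma copula_bounds:
  fixes C :: "real^'d \<Rightarrow> real"
  assumes "copula C" "unit_cube u"
  shows "0 \<le> C u \<and> C u \<le> 1"
proof -
  obtain M where M: "prob_space M" "sets M = sets (borel :: (real^'d) measure)"
    "\<And>i t. 0 \<le> t \<Longrightarrow> t \<le> 1 \<Longrightarrow> measure M {x. x $ i \<le> t} = t"
    "\<And>u. unit_cube u \<Longrightarrow> C u = measure M {x. \<forall>i. x $ i \<le> u $ i}"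
    using copulaE[OF assms(1)] by blast
  interpret prob_space M by fact
  show ?thesis using M(4)[OF assms(2)] by simp
qed

lemma copula_mono:
  fixes C :: "real^'d \<Rightarrow> real"
  assumes "copula C" "unit_cube u" "unit_cube v" "\<And>i. u $ i \<le> v $ i"
  shows "C u \<le> C v"
proof -
  obtain M where M: "prob_space M" "sets M = sets (borel :: (real^'d) measure)"
    "\<And>i t. 0 \<le> t \<Longrightarrow> t \<le> 1 \<Longrightarrow> measure M {x. x $ i \<le> t} = t"
    "\<And>u. unit_cube u \<Longrightarrow> C u = measure M {x. \<forall>i. x $ i \<le> u $ i}"
    using copulaE[OF assms(1)] by blast
  interpret prob_space M by fact
  have "{x. \<forall>i. x $ i \<le> u $ i} \<subseteq> {x. \<forall>i. x $ i \<le> v $ i}"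
    using assms(4) by (blast intro: order_trans)
  moreover have "{x. \<forall>i. x $ i \<le> v $ i} \<in> sets M" unfolding M(2) by measurable
  ultimately show ?thesis unfolding M(4)[OF assms(2)] M(4)[OF assms(3)] by (rule finite_measure_mono)
qed

lemma copula_diff_le:
  fixes C :: "real^'d \<Rightarrow> real"
  assumes "copula C" "unit_cube u" "unit_cube v"
  shows "C u - C v \<le> (\<Sum>i\<in>UNIV. \<bar>u $ i - v $ i\<bar>)"
proof -
  obtain M where M: "prob_space M" "sets M = sets (borel :: (real^'d) measure)"
    "\<And>i t. 0 \<le> t \<Longrightarrow> t \<le> 1 \<Longrightarrow> measure M {x. x $ i \<le> t} = t"
    "\<And>u. unit_cube u \<Longrightarrow> C u = measure M {x. \<forall>i. x $ i \<le> u $ i}"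
    using copulaE[OF assms(1)] by blast
  interpret prob_space M by fact
  have orthant: "{x. \<forall>i. x $ i \<le> a $ i} \<in> sets M" for a :: "real^'d"
    unfolding M(2) by measurable
  have half_space: "{x. x $ i \<le> t} \<in> sets M" for i and t :: real
    unfolding M(2) by measurable
  define D where "D i = {x. x $ i \<le> u $ i} - {x. x $ i \<le> v $ i}" for i
  have D: "D i \<in> sets M" for i
    unfolding D_def using half_space by blast
  have measure_D: "measure M (D i) \<le> \<bar>u $ i - v $ i\<bar>" for i
  proof (cases "v $ i \<le> u $ i")
    case True
    then have "measure M (D i) = measure M {x. x $ i \<le> u $ i} - measure M {x. x $ i \<le> v $ i}"
      unfolding D_def using half_space by (intro finite_measure_Diff) auto
    also have "\<dots> = u $ i - v $ i" using M(3) assms(2,3) unfolding unit_cube_def by auto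
    finally show ?thesis by simp
  next
    case False
    then have "D i = {}" unfolding D_def by auto
    then show ?thesis by simp
  qed
  have "{x. \<forall>i. x $ i \<le> u $ i} \<subseteq> {x. \<forall>i. x $ i \<le> v $ i} \<union> (\<Union>i. D i)"
    unfolding D_def by auto
  then have "C u \<le> measure M ({x. \<forall>i. x $ i \<le> v $ i} \<union> (\<Union>i. D i))"
    using M(4)[OF assms(2)] orthant D by (auto intro!: finite_measure_mono)
  also have "\<dots> \<le> measure M {x. \<forall>i. x $ i \<le> v $ i} + measure M (\<Union>i. D i)"
    using orthant D by (intro measure_Un_le) auto
  also have "measure M (\<Union>i. D i) \<le> (\<Sum>i\<in>UNIV. measure M (D i))"
    using D by (intro finite_measure_subadditive_finite) auto
  also have "\<dots> \<le> (\<Sum>i\<in>UNIV. \<bar>u $ i - v $ i\<bar>)"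
    by (intro sum_mono measure_D)
  finally show ?thesis using M(4)[OF assms(3)] by simp
qed

lemma copula2_rectangle_inequality:
  fixes C :: "real^2 \<Rightarrow> real"
  assumes "copula C" "0 \<le> a1" "a1 \<le> a2" "a2 \<le> 1" "0 \<le> b1" "b1 \<le> b2" "b2 \<le> 1"
  shows "C (vector [a1, b2]) + C (vector [a2, b1]) \<le> C (vector [a1, b1]) + C (vector [a2, b2])"
proof -
  obtain M where M: "prob_space M" "sets M = sets (borel :: (real^2) measure)"
    "\<And>i t. 0 \<le> t \<Longrightarrow> t \<le> 1 \<Longrightarrow> measure M {x. x $ i \<le> t} = t"
    "\<And>u. unit_cube u \<Longrightarrow> C u = measure M {x. \<forall>i. x $ i \<le> u $ i}"
    using copulaE[OF assms(1)] by blast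
  interpret prob_space M by fact
  define A where "A a b = {x::real^2. x $ 1 \<le> a \<and> x $ 2 \<le> b}" for a b
  have A: "A a b \<in> sets M" for a b unfolding A_def using M(2) by simp measurable
  have CA: "C (vector [a, b]) = measure M (A a b)" if "0 \<le> a" "a \<le> 1" "0 \<le> b" "b \<le> 1" for a b
    using M(4)[of "vector [a, b]"] that unfolding A_def unit_cube_def by (simp add: forall_2)
  have "measure M (A a1 b2 \<union> A a2 b1)
      = measure M (A a1 b2) + measure M (A a2 b1) - measure M (A a1 b2 \<inter> A a2 b1)"
    using A by (intro measure_Un3) (auto simp: fmeasurable_eq_sets)
  moreover have "A a1 b2 \<inter> A a2 b1 = A a1 b1" using assms unfolding A_def by auto
  moreover have "measure M (A a1 b2 \<union> A a2 b1) \<le> measure M (A a2 b2)"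
    using assms A by (intro finite_measure_mono) (auto simp: A_def)
  ultimately show ?thesis using assms by (simp add: CA)
qed

definition clamp_cube :: "real^'d \<Rightarrow> real^'d" where
  "clamp_cube u = (\<chi> i. max 0 (min 1 (u $ i)))"

definition copula_ext :: "(real^'d \<Rightarrow> real) \<Rightarrow> real^'d \<Rightarrow> real" where
  "copula_ext C u = C (clamp_cube u)"

lemma unit_cube_clamp_cube: "unit_cube (clamp_cube u)"
  unfolding unit_cube_def clamp_cube_def by auto

lemma clamp_cube_eq: "unit_cube u \<Longrightarrow> clamp_cube u = u"
  unfolding unit_cube_def clamp_cube_def by (simp add: vec_eq_iff)

lemma copula_ext_eq: "unit_cube u \<Longrightarrow> copula_ext C u = C u"
  unfolding copula_ext_def by (simp add: clamp_cube_eq)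

lemma copula_ext_bounds: "copula C \<Longrightarrow> 0 \<le> copula_ext C u \<and> copula_ext C u \<le> 1"
  unfolding copula_ext_def by (rule copula_bounds[OF _ unit_cube_clamp_cube])

lemma copula_ext_abs_diff_le:
  assumes "copula C"
  shows "\<bar>copula_ext C u - copula_ext C v\<bar> \<le> (\<Sum>i\<in>UNIV. \<bar>u $ i - v $ i\<bar>)"
proof -
  have "\<bar>copula_ext C u - copula_ext C v\<bar> \<le> (\<Sum>i\<in>UNIV. \<bar>clamp_cube u $ i - clamp_cube v $ i\<bar>)"
    using copula_diff_le[OF assms unit_cube_clamp_cube unit_cube_clamp_cube, of u v]
      copula_diff_le[OF assms unit_cube_clamp_cube unit_cube_clamp_cube, of v u]
    unfolding copula_ext_def by (simp add: abs_minus_commute)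
  also have "\<dots> \<le> (\<Sum>i\<in>UNIV. \<bar>u $ i - v $ i\<bar>)"
    by (intro sum_mono) (auto simp: clamp_cube_def max_def min_def abs_if)
  finally show ?thesis .
qed

lemma continuous_on_copula_ext:
  fixes C :: "real^'d \<Rightarrow> real"
  assumes "copula C"
  shows "continuous_on UNIV (copula_ext C)"
proof (rule lipschitz_on_continuous_on)
  show "(real CARD('d))-lipschitz_on UNIV (copula_ext C)"
  proof (rule lipschitz_onI)
    fix u v :: "real^'d"
    have "dist (copula_ext C u) (copula_ext C v) \<le> (\<Sum>i\<in>UNIV. \<bar>u $ i - v $ i\<bar>)"
      using copula_ext_abs_diff_le[OF assms] by (simp add: dist_real_def)
    also have "\<dots> \<le> (\<Sum>i\<in>(UNIV::'d set). dist u v)"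
      by (intro sum_mono) (metis component_le_norm_cart dist_norm vector_minus_component)
    finally show "dist (copula_ext C u) (copula_ext C v) \<le> real CARD('d) * dist u v" by simp
  qed simp
qed

lemma M2E:
  assumes "L \<in> M2"
  obtains C :: "real^2 \<Rightarrow> real" where "copula C"
    "\<And>t w. 0 \<le> t \<Longrightarrow> 0 \<le> w \<Longrightarrow> ((\<lambda>s. C (vector [s * t, s * w]) / s) \<longlongrightarrow> L t w) (at_right 0)"
  using assms unfolding M2_def by blast

lemma unit_cube_vector2:
  "unit_cube (vector [a, b] :: real^2) \<longleftrightarrow> 0 \<le> a \<and> a \<le> 1 \<and> 0 \<le> b \<and> b \<le> 1"
  unfolding unit_cube_def by (auto simp: forall_2)

lemma eventually_at_right_0_mult_le_1:
  fixes K :: real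
  shows "\<forall>\<^sub>F s in at_right 0. 0 < s \<and> s * K \<le> 1"
proof -
  have "((\<lambda>s. s * K) \<longlongrightarrow> 0 * K) (at_right 0)" by (intro tendsto_mult_right tendsto_ident_at)
  then have "\<forall>\<^sub>F s in at_right 0. s * K < 1" by (rule order_tendstoD) simp
  with eventually_at_right_less[of 0] show ?thesis by eventually_elim simp
qed

lemma M2_increment_bounds:
  assumes "L \<in> M2" "0 \<le> t1" "t1 \<le> t2" "0 \<le> w"
  shows "0 \<le> L t2 w - L t1 w \<and> L t2 w - L t1 w \<le> t2 - t1"
proof -
  obtain C :: "real^2 \<Rightarrow> real" where C: "copula C"
    "\<And>t w. 0 \<le> t \<Longrightarrow> 0 \<le> w \<Longrightarrow> ((\<lambda>s. C (vector [s * t, s * w]) / s) \<longlongrightarrow> L t w) (at_right 0)"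
    using M2E[OF assms(1)] by blast
  define q where "q s = C (vector [s * t2, s * w]) / s - C (vector [s * t1, s * w]) / s" for s
  have lim: "(q \<longlongrightarrow> L t2 w - L t1 w) (at_right 0)"
    unfolding q_def using assms by (intro tendsto_diff C(2)) auto
  have "0 \<le> q s \<and> q s \<le> t2 - t1" if s: "0 < s" "s * (t2 + w) \<le> 1" for s
  proof -
    have "s * t1 \<le> s * t2" "0 \<le> s * t1" "0 \<le> s * w" "s * t2 + s * w \<le> 1"
      using s assms by (simp_all add: mult_left_mono distrib_left)
    then have cube: "unit_cube (vector [s * t2, s * w] :: real^2)" "unit_cube (vector [s * t1, s * w] :: real^2)"
      by (simp_all add: unit_cube_vector2)
    have "\<forall>i. vector [s * t1, s * w] $ i \<le> (vector [s * t2, s * w] :: real^2) $ i"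
      using \<open>s * t1 \<le> s * t2\<close> by (simp add: forall_2)
    then have "C (vector [s * t1, s * w]) \<le> C (vector [s * t2, s * w])"
      using cube by (intro copula_mono[OF C(1)]) auto
    moreover have "C (vector [s * t2, s * w]) - C (vector [s * t1, s * w]) \<le> s * (t2 - t1)"
      using copula_diff_le[OF C(1) cube] assms s by (simp add: UNIV_2 algebra_simps)
    ultimately show ?thesis using s
      by (simp add: q_def diff_divide_distrib[symmetric] pos_divide_le_eq mult.commute)
  qed
  with eventually_at_right_0_mult_le_1[of "t2 + w"]
  have ev: "\<forall>\<^sub>F s in at_right 0. 0 \<le> q s \<and> q s \<le> t2 - t1" by (auto elim: eventually_mono)
  have "0 \<le> L t2 w - L t1 w"
    using ev by (intro tendsto_lowerbound[OF lim]) (auto elim: eventually_mono)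
  moreover have "L t2 w - L t1 w \<le> t2 - t1"
    using ev by (intro tendsto_upperbound[OF lim]) (auto elim: eventually_mono)
  ultimately show ?thesis ..
qed

lemma M2_homogeneous:
  assumes "L \<in> M2" "0 \<le> t" "0 \<le> w" "0 < c"
  shows "L (c * t) (c * w) = c * L t w"
proof -
  obtain C :: "real^2 \<Rightarrow> real" where C: "copula C"
    "\<And>t w. 0 \<le> t \<Longrightarrow> 0 \<le> w \<Longrightarrow> ((\<lambda>s. C (vector [s * t, s * w]) / s) \<longlongrightarrow> L t w) (at_right 0)"
    using M2E[OF assms(1)] by blast
  have "filterlim ((*) c) (at_right 0) (at_right (0::real))"
    using filtermap_times_pos_at_right[OF assms(4), of 0] by (simp add: filterlim_def)
  from filterlim_compose[OF C(2)[OF assms(2,3)] this]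
  have "((\<lambda>s. c * (C (vector [(c * s) * t, (c * s) * w]) / (c * s))) \<longlongrightarrow> c * L t w) (at_right 0)"
    by (intro tendsto_mult_left) (simp add: o_def)
  moreover have "(\<lambda>s. c * (C (vector [(c * s) * t, (c * s) * w]) / (c * s)))
      = (\<lambda>s. C (vector [s * (c * t), s * (c * w)]) / s)"
    using assms(4) by (auto simp: fun_eq_iff field_simps)
  ultimately have "((\<lambda>s. C (vector [s * (c * t), s * (c * w)]) / s) \<longlongrightarrow> c * L t w) (at_right 0)"
    by simp
  moreover have "((\<lambda>s. C (vector [s * (c * t), s * (c * w)]) / s) \<longlongrightarrow> L (c * t) (c * w)) (at_right 0)"
    using assms by (intro C(2)) auto
  ultimately show ?thesis using tendsto_unique[OF trivial_limit_at_right_real] by blast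
qed

lemma M2_rectangle_inequality:
  assumes "L \<in> M2" "0 \<le> a" "a \<le> b" "0 \<le> w1" "w1 \<le> w2"
  shows "L b w1 - L a w1 \<le> L b w2 - L a w2"
proof -
  obtain C :: "real^2 \<Rightarrow> real" where C: "copula C"
    "\<And>t w. 0 \<le> t \<Longrightarrow> 0 \<le> w \<Longrightarrow> ((\<lambda>s. C (vector [s * t, s * w]) / s) \<longlongrightarrow> L t w) (at_right 0)"
    using M2E[OF assms(1)] by blast
  define q where "q s = (C (vector [s * b, s * w2]) / s - C (vector [s * a, s * w2]) / s)
     - (C (vector [s * b, s * w1]) / s - C (vector [s * a, s * w1]) / s)" for s
  have lim: "(q \<longlongrightarrow> (L b w2 - L a w2) - (L b w1 - L a w1)) (at_right 0)"
    unfolding q_def using assms by (intro tendsto_diff C(2)) auto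
  have "0 \<le> q s" if s: "0 < s" "s * (b + w2) \<le> 1" for s
  proof -
    have "s * a \<le> s * b" "0 \<le> s * a" "0 \<le> s * w1" "s * w1 \<le> s * w2" "s * b + s * w2 \<le> 1"
      using s assms by (simp_all add: mult_left_mono distrib_left)
    then have "C (vector [s * a, s * w2]) + C (vector [s * b, s * w1])
        \<le> C (vector [s * a, s * w1]) + C (vector [s * b, s * w2])"
      by (intro copula2_rectangle_inequality[OF C(1)]) linarith+
    then show ?thesis using s
      by (simp add: q_def diff_divide_distrib[symmetric] add_divide_distrib[symmetric] divide_nonneg_pos)
  qed
  with eventually_at_right_0_mult_le_1[of "b + w2"] have "\<forall>\<^sub>F s in at_right 0. 0 \<le> q s"
    by (auto elim: eventually_mono)
  from tendsto_lowerbound[OF lim this] show ?thesis by simp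
qed

lemma M2_scaling_inequality:
  assumes "L \<in> M2" "0 \<le> a" "a \<le> b" "0 \<le> w" "1 \<le> c"
  shows "L b w - L a w \<le> c * (L (b / c) w - L (a / c) w)"
proof -
  have "L b w - L a w \<le> L b (c * w) - L a (c * w)"
    using assms mult_right_mono[of 1 c w] by (intro M2_rectangle_inequality) auto
  also have "L b (c * w) = c * L (b / c) w" using M2_homogeneous[OF assms(1), of "b / c" w c] assms by simp
  also have "L a (c * w) = c * L (a / c) w" using M2_homogeneous[OF assms(1), of "a / c" w c] assms by simp
  finally show ?thesis by (simp add: algebra_simps)
qed

lemma M2_continuous_on:
  assumes "L \<in> M2" "0 \<le> w"
  shows "continuous_on {0..} (\<lambda>t. L t w)"
proof (rule lipschitz_on_continuous_on)
  show "1-lipschitz_on {0..} (\<lambda>t. L t w)"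
  proof (rule lipschitz_onI)
    fix s t :: real assume "s \<in> {0..}" "t \<in> {0..}"
    then show "dist (L s w) (L t w) \<le> 1 * dist s t"
      using M2_increment_bounds[OF assms(1) _ _ assms(2), of s t]
        M2_increment_bounds[OF assms(1) _ _ assms(2), of t s]
      by (cases "s \<le> t") (auto simp: dist_real_def)
  qed simp
qed

lemma M2_concave:
  assumes "L \<in> M2" "0 \<le> w"
  shows "concave_on {0<..} (\<lambda>t. L t w)"
proof (rule concave_on_if_geometric_midpoint)
  show "continuous_on {0<..} (\<lambda>t. L t w)"
    using M2_continuous_on[OF assms] by (rule continuous_on_subset) auto
next
  fix p q :: real assume pq: "0 < p" "p < q"
  define m where "m = sqrt (p * q)"
  have "p * p < p * q" "p * q < q * q"
    using pq by (simp_all add: mult_strict_left_mono mult_strict_right_mono)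
  then have "sqrt (p * p) < m" "m < sqrt (q * q)" unfolding m_def by (simp_all only: real_sqrt_less_iff)
  then have m: "p < m" "m < q" "m * m = p * q" using pq by (simp_all add: m_def)
  \<comment> \<open>scaling [m, q] down by the factor m / p = q / m lands on [p, m]\<close>
  have "1 \<le> m / p" "q / (m / p) = m" "m / (m / p) = p"
    using m pq by (simp_all add: le_divide_eq field_simps)
  then have "L q w - L m w \<le> (m / p) * (L m w - L p w)"
    using M2_scaling_inequality[OF assms(1) _ _ assms(2), of m q "m / p"] m pq by simp
  then have "(L q w - L m w) * (m - p) \<le> (m / p) * (L m w - L p w) * (m - p)"
    using m by (intro mult_right_mono) auto
  also have "\<dots> = (L m w - L p w) * ((m / p) * (m - p))" by (simp only: ac_simps)
  also have "(m / p) * (m - p) = q - m" using m pq by (simp add: field_simps)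
  finally show "(q - m) * L p w + (m - p) * L q w \<le> (q - p) * L m w"
    by (simp add: algebra_simps)
qed

lemma M2_concave_unit_slope:
  assumes "L \<in> M2" "0 \<le> w"
  shows "concave_unit_slope (\<lambda>t. L t w)"
  using M2_concave[OF assms] M2_increment_bounds[OF assms(1) _ _ assms(2)]
  by unfold_locales auto

lemma part1_eq_pos_deriv: "0 < t \<Longrightarrow> part1 L t w = pos_deriv (\<lambda>s. L s w) t"
  unfolding part1_def pos_deriv_def by simp

section \<open>Convergence of phi\<close>

text \<open>The integrand of phi_fin and phi_inf, changed only at t \<le> 0 (where tail dependence
  functions are unconstrained) and by clamping the argument of the copula to the unit cube, where
  it already lies; both changes serve to make it Borel measurable.\<close>
definition phi_integrand ::
    "(real^'d \<Rightarrow> real) \<Rightarrow> ('d \<Rightarrow> real \<Rightarrow> real \<Rightarrow> real) \<Rightarrow> real^'d \<Rightarrow> real \<Rightarrow> real" where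
  "phi_integrand D Xi w t = copula_ext D (\<chi> i. pos_deriv (\<lambda>s. Xi i s (w $ i)) t)"

lemma borel_measurable_phi_integrand:
  fixes D :: "real^'d \<Rightarrow> real"
  assumes "copula D" "\<And>i. Xi i \<in> M2" "nonneg_vec w"
  shows "phi_integrand D Xi w \<in> borel_measurable lebesgue"
proof -
  have "(\<lambda>t. \<chi> i. pos_deriv (\<lambda>s. Xi i s (w $ i)) t) \<in> borel_measurable lebesgue"
    using assms(2,3) unfolding nonneg_vec_def
    by (intro borel_measurable_vec_lambda borel_measurable_lebesgueI
        concave_unit_slope.borel_measurable_pos_deriv M2_concave_unit_slope) auto
  from borel_measurable_continuous_on[OF continuous_on_copula_ext[OF assms(1)] this]
  show ?thesis unfolding phi_integrand_def[abs_def] .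
qed

lemma phi_integrand_bounds: "copula D \<Longrightarrow> 0 \<le> phi_integrand D Xi w t \<and> phi_integrand D Xi w t \<le> 1"
  unfolding phi_integrand_def by (rule copula_ext_bounds)

lemma phi_integrand_eq:
  fixes D :: "real^'d \<Rightarrow> real"
  assumes "\<And>i. Xi i \<in> M2" "nonneg_vec w" "0 < t"
  shows "D (\<chi> i. part1 (Xi i) t (w $ i)) = phi_integrand D Xi w t"
proof -
  have "unit_cube (\<chi> i. pos_deriv (\<lambda>s. Xi i s (w $ i)) t)"
    using assms(1,2) concave_unit_slope.pos_deriv_bounds[OF M2_concave_unit_slope]
    unfolding unit_cube_def nonneg_vec_def by auto
  then show ?thesis
    using assms(3) by (simp add: phi_integrand_def part1_eq_pos_deriv copula_ext_eq)
qed

lemma phi_fin_eq_set_lebesgue_integral: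
  fixes D :: "real^'d \<Rightarrow> real"
  assumes "copula D" "\<And>i. Xi i \<in> M2" "nonneg_vec w"
  shows "phi_fin D w0 Xi w = (LINT t:{0..w0}|lebesgue. phi_integrand D Xi w t)"
proof -
  have "set_integrable lebesgue {0..w0} (phi_integrand D Xi w)"
    unfolding set_integrable_def
    using borel_measurable_phi_integrand[OF assms] phi_integrand_bounds[OF assms(1)]
    by (intro integrableI_bounded_set_indicator[where B = 1]) (auto simp: emeasure_lborel_Icc_eq)
  then have "(LINT t:{0..w0}|lebesgue. phi_integrand D Xi w t) = integral {0..w0} (phi_integrand D Xi w)"
    by (rule set_lebesgue_integral_eq_integral(2))
  also have "\<dots> = phi_fin D w0 Xi w"
    unfolding phi_fin_def
    by (rule integral_spike[of "{0}"]) (use phi_integrand_eq[OF assms(2,3)] in auto)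
  finally show ?thesis ..
qed

lemma phi_inf_eq_integral:
  fixes D :: "real^'d \<Rightarrow> real"
  assumes "\<And>i. Xi i \<in> M2" "nonneg_vec w"
  shows "phi_inf D Xi w = integral {0..} (phi_integrand D Xi w)"
  unfolding phi_inf_def
  by (rule integral_spike[of "{0}"]) (use phi_integrand_eq[OF assms] in auto)

lemma phi_fin_tendsto_if_AE_tendsto:
  fixes D :: "nat \<Rightarrow> real^'d \<Rightarrow> real"
  assumes "\<And>n. copula (D n)" "copula E" "\<And>n i. Xi n i \<in> M2" "\<And>i. Y i \<in> M2" "nonneg_vec w"
    and lim: "AE t in lebesgue. (\<lambda>n. phi_integrand (D n) (Xi n) w t) \<longlonglongrightarrow> phi_integrand E Y w t"
  shows "(\<lambda>n. phi_fin (D n) w0 (Xi n) w) \<longlonglongrightarrow> phi_fin E w0 Y w"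
  unfolding phi_fin_eq_set_lebesgue_integral[OF assms(1,3,5)] phi_fin_eq_set_lebesgue_integral[OF assms(2,4,5)]
    set_lebesgue_integral_def
proof (rule integral_dominated_convergence[where w = "indicator {0..w0}"])
  show "integrable lebesgue (indicator {0..w0} :: real \<Rightarrow> real)"
    by (rule integrable_real_indicator) (auto simp: emeasure_lborel_Icc_eq)
  show "AE t in lebesgue. (\<lambda>n. indicator {0..w0} t *\<^sub>R phi_integrand (D n) (Xi n) w t)
      \<longlonglongrightarrow> indicator {0..w0} t *\<^sub>R phi_integrand E Y w t"
    using lim by eventually_elim (rule tendsto_scaleR[OF tendsto_const])
  show "AE t in lebesgue. norm (indicator {0..w0} t *\<^sub>R phi_integrand (D n) (Xi n) w t) \<le> indicator {0..w0} t" for n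
    using phi_integrand_bounds[OF assms(1)] by (auto simp: indicator_def)
  have ind: "indicator {0..w0} \<in> borel_measurable (lebesgue :: real measure)"
    by (intro borel_measurable_indicator fmeasurableD lmeasurable_interval)
  show "(\<lambda>t. indicator {0..w0} t *\<^sub>R phi_integrand E Y w t) \<in> borel_measurable lebesgue"
    "(\<lambda>t. indicator {0..w0} t *\<^sub>R phi_integrand (D n) (Xi n) w t) \<in> borel_measurable lebesgue" for n
    using assms ind by (auto intro!: borel_measurable_times borel_measurable_phi_integrand)
qed

lemma phi_fin_tendsto_copula:
  fixes C :: "real^'d \<Rightarrow> real"
  assumes "\<And>i. L i \<in> M2" "copula C" "\<And>n. copula (Cs n)"
    and "\<And>u. unit_cube u \<Longrightarrow> (\<lambda>n. Cs n u) \<longlonglongrightarrow> C u" "nonneg_vec w"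
  shows "(\<lambda>n. phi_fin (Cs n) w0 L w) \<longlonglongrightarrow> phi_fin C w0 L w"
proof (rule phi_fin_tendsto_if_AE_tendsto[where Xi = "\<lambda>n. L"])
  show "AE t in lebesgue. (\<lambda>n. phi_integrand (Cs n) L w t) \<longlonglongrightarrow> phi_integrand C L w t"
    unfolding phi_integrand_def copula_ext_def using assms(4)[OF unit_cube_clamp_cube] by (intro AE_I2) simp
qed (use assms in auto)

lemma AE_tendsto_pos_deriv:
  assumes f: "concave_unit_slope f" and fs: "\<And>n. concave_unit_slope (fs n)"
    and lim: "\<And>s. 0 < s \<Longrightarrow> (\<lambda>n. fs n s) \<longlonglongrightarrow> f s"
  shows "AE t in lebesgue. (\<lambda>n. pos_deriv (fs n) t) \<longlonglongrightarrow> pos_deriv f t"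
proof -
  define N where "N = {t \<in> {0<..}. \<not> isCont (right_deriv f) t}
    \<union> (\<Union>n. {t \<in> {0<..}. \<not> isCont (right_deriv (fs n)) t})"
  have "countable N" unfolding N_def
    using concave_unit_slope.countable_discontinuities_right_deriv[OF f]
      concave_unit_slope.countable_discontinuities_right_deriv[OF fs] by auto
  then have "AE t in lebesgue. t \<notin> N"
    by (intro AE_completion AE_not_in countable_imp_null_set_lborel)
  then show ?thesis
  proof eventually_elim
    case (elim t)
    show ?case
    proof (cases "0 < t")
      case True
      with elim have "isCont (right_deriv f) t" "\<And>n. isCont (right_deriv (fs n)) t"
        unfolding N_def by auto
      moreover from this have "f differentiable (at t)"
        using concave_unit_slope.has_real_derivative_right_deriv[OF f True]
        unfolding real_differentiable_def by blast
      ultimately show ?thesis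
        using concave_unit_slope.tendsto_right_deriv_sequence[OF f fs lim True]
          concave_unit_slope.pos_deriv_eq_right_deriv[OF f True]
          concave_unit_slope.pos_deriv_eq_right_deriv[OF fs True]
        by simp
    qed (simp add: pos_deriv_def)
  qed
qed

lemma phi_fin_tendsto_tail_dependence:
  fixes C :: "real^'d \<Rightarrow> real"
  assumes L: "\<And>i. L i \<in> M2" and C: "copula C" and Ls: "\<And>n i. Ls n i \<in> M2"
    and lim: "\<And>i t w. 0 \<le> t \<Longrightarrow> 0 \<le> w \<Longrightarrow> (\<lambda>n. Ls n i t w) \<longlonglongrightarrow> L i t w"
    and w: "nonneg_vec w"
  shows "(\<lambda>n. phi_fin C w0 (Ls n) w) \<longlonglongrightarrow> phi_fin C w0 L w"
proof (rule phi_fin_tendsto_if_AE_tendsto[where D = "\<lambda>n. C"])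
  have wi: "0 \<le> w $ i" for i using w unfolding nonneg_vec_def by auto
  have "AE t in lebesgue. \<forall>i\<in>UNIV. (\<lambda>n. pos_deriv (\<lambda>s. Ls n i s (w $ i)) t)
      \<longlonglongrightarrow> pos_deriv (\<lambda>s. L i s (w $ i)) t"
    using L Ls lim wi
    by (intro AE_finite_allI AE_tendsto_pos_deriv M2_concave_unit_slope) auto
  then show "AE t in lebesgue. (\<lambda>n. phi_integrand C (Ls n) w t) \<longlonglongrightarrow> phi_integrand C L w t"
  proof eventually_elim
    case (elim t)
    have "isCont (copula_ext C) (\<chi> i. pos_deriv (\<lambda>s. L i s (w $ i)) t)"
      using continuous_on_copula_ext[OF C] by (simp add: continuous_on_eq_continuous_at)
    moreover have "(\<lambda>n. \<chi> i. pos_deriv (\<lambda>s. Ls n i s (w $ i)) t) \<longlonglongrightarrow> (\<chi> i. pos_deriv (\<lambda>s. L i s (w $ i)) t)"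
      using elim by (intro tendsto_vec_lambda) simp
    ultimately show ?case unfolding phi_integrand_def by (rule isCont_tendsto_compose)
  qed
qed (use assms in auto)

lemma nn_integral_abs_diff_phi_integrand_le:
  fixes C :: "real^'d \<Rightarrow> real"
  assumes C: "copula C" and X: "\<And>i. X i \<in> M2" and Y: "\<And>i. Y i \<in> M2" and w: "nonneg_vec w"
  shows "(\<integral>\<^sup>+ t \<in> {0..}. ennreal \<bar>phi_integrand C X w t - phi_integrand C Y w t\<bar> \<partial>lebesgue)
    \<le> (\<Sum>i\<in>UNIV. \<integral>\<^sup>+ t \<in> {0..}. ennreal \<bar>part1 (X i) t (w $ i) - part1 (Y i) t (w $ i)\<bar> \<partial>lebesgue)"
proof -
  define d where "d i t = \<bar>pos_deriv (\<lambda>s. X i s (w $ i)) t - pos_deriv (\<lambda>s. Y i s (w $ i)) t\<bar>" for i t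
  have wi: "0 \<le> w $ i" for i using w unfolding nonneg_vec_def by auto
  have [measurable]: "pos_deriv (\<lambda>s. Xi i s (w $ i)) \<in> borel_measurable lebesgue"
    if "\<And>i. Xi i \<in> M2" for Xi i
    using that wi by (intro borel_measurable_lebesgueI
        concave_unit_slope.borel_measurable_pos_deriv M2_concave_unit_slope)
  have [measurable]: "(\<lambda>t. t) \<in> borel_measurable (lebesgue :: real measure)"
    using id_borel_measurable_lebesgue by (simp add: id_def)
  have "\<bar>phi_integrand C X w t - phi_integrand C Y w t\<bar> \<le> (\<Sum>i\<in>UNIV. d i t)" for t
    unfolding phi_integrand_def d_def by (rule order_trans[OF copula_ext_abs_diff_le[OF C]]) simp
  then have "ennreal \<bar>phi_integrand C X w t - phi_integrand C Y w t\<bar> * indicator {0..} t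
      \<le> (\<Sum>i\<in>UNIV. ennreal (d i t) * indicator {0..} t)" for t
    by (simp add: d_def mult_right_mono flip: sum_distrib_right)
  then have "(\<integral>\<^sup>+ t \<in> {0..}. ennreal \<bar>phi_integrand C X w t - phi_integrand C Y w t\<bar> \<partial>lebesgue)
      \<le> (\<integral>\<^sup>+ t. (\<Sum>i\<in>UNIV. ennreal (d i t) * indicator {0..} t) \<partial>lebesgue)"
    by (rule nn_integral_mono)
  also have "\<dots> = (\<Sum>i\<in>UNIV. \<integral>\<^sup>+ t \<in> {0..}. ennreal (d i t) \<partial>lebesgue)"
    unfolding d_def using X Y by (intro nn_integral_sum) measurable
  also have "\<dots> = (\<Sum>i\<in>UNIV. \<integral>\<^sup>+ t \<in> {0..}. ennreal \<bar>part1 (X i) t (w $ i) - part1 (Y i) t (w $ i)\<bar> \<partial>lebesgue)"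
  proof (intro sum.cong refl nn_integral_cong_AE)
    have "AE t in lebesgue. t \<notin> {0::real}"
      by (intro AE_completion AE_not_in countable_imp_null_set_lborel) simp
    then show "AE t in lebesgue. ennreal (d i t) * indicator {0..} t
        = ennreal \<bar>part1 (X i) t (w $ i) - part1 (Y i) t (w $ i)\<bar> * indicator {0..} t" for i
      by (auto elim!: eventually_mono simp: d_def part1_eq_pos_deriv indicator_def less_le)
  qed
  finally show ?thesis .
qed

lemma phi_inf_tendsto_L1:
  fixes C :: "real^'d \<Rightarrow> real"
  assumes L: "\<And>i. L i \<in> M2" and C: "copula C" and Ls: "\<And>n i. Ls n i \<in> M2"
    and L1: "\<And>i w. 0 \<le> w \<Longrightarrow>
      (\<lambda>n. \<integral>\<^sup>+ t \<in> {0..}. ennreal \<bar>part1 (Ls n i) t w - part1 (L i) t w\<bar> \<partial>lebesgue) \<longlonglongrightarrow> 0"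
    and w: "nonneg_vec w"
  shows "(\<lambda>n. phi_inf C (Ls n) w) \<longlonglongrightarrow> phi_inf C L w"
  unfolding phi_inf_eq_integral[OF Ls w] phi_inf_eq_integral[OF L w]
proof (rule tendsto_integral_if_L1_tendsto)
  have "(\<lambda>n. \<Sum>i\<in>UNIV. \<integral>\<^sup>+ t \<in> {0..}. ennreal \<bar>part1 (Ls n i) t (w $ i) - part1 (L i) t (w $ i)\<bar> \<partial>lebesgue)
      \<longlonglongrightarrow> 0"
    using L1 w unfolding nonneg_vec_def by (intro tendsto_null_sum) blast
  then show "(\<lambda>n. \<integral>\<^sup>+ t \<in> {0..}. ennreal \<bar>phi_integrand C (Ls n) w t - phi_integrand C L w t\<bar> \<partial>lebesgue)
      \<longlonglongrightarrow> 0"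
    by (rule tendsto_sandwich[where f = "\<lambda>_. 0", OF _ _ tendsto_const, rotated 2])
      (simp_all add: nn_integral_abs_diff_phi_integrand_le[OF C Ls L w])
qed (use L Ls C w in \<open>auto intro!: borel_measurable_phi_integrand\<close>)

theorem mainTheorem2:
  fixes L :: "'d::finite \<Rightarrow> real \<Rightarrow> real \<Rightarrow> real" and C :: "real^'d \<Rightarrow> real"
  assumes L: "\<And>i. L i \<in> M2" and C: "copula C"
  shows
   "(\<forall>Cn :: nat \<Rightarrow> real^'d \<Rightarrow> real.
       (\<forall>n. copula (Cn n)) \<and> (\<forall>u. unit_cube u \<longrightarrow> (\<lambda>n. Cn n u) \<longlonglongrightarrow> C u) \<longrightarrow>
       (\<forall>w0 w. 0 \<le> w0 \<and> nonneg_vec w \<longrightarrow>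
          (\<lambda>n. phi_fin (Cn n) w0 L w) \<longlonglongrightarrow> phi_fin C w0 L w))
  \<and> (\<forall>Ln :: nat \<Rightarrow> 'd \<Rightarrow> real \<Rightarrow> real \<Rightarrow> real.
       (\<forall>n i. Ln n i \<in> M2) \<and>
       (\<forall>i t w. 0 \<le> t \<and> 0 \<le> w \<longrightarrow> (\<lambda>n. Ln n i t w) \<longlonglongrightarrow> L i t w) \<longrightarrow>
       (\<forall>w0 w. 0 \<le> w0 \<and> nonneg_vec w \<longrightarrow>
          (\<lambda>n. phi_fin C w0 (Ln n) w) \<longlonglongrightarrow> phi_fin C w0 L w))
  \<and> (\<forall>Ln :: nat \<Rightarrow> 'd \<Rightarrow> real \<Rightarrow> real \<Rightarrow> real.
       (\<forall>n i. Ln n i \<in> M2) \<and>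
       (\<forall>i w. 0 \<le> w \<longrightarrow>
          (\<lambda>n. \<integral>\<^sup>+ t \<in> {0..}. ennreal \<bar>part1 (Ln n i) t w - part1 (L i) t w\<bar> \<partial>lebesgue)
            \<longlonglongrightarrow> 0) \<longrightarrow>
       (\<forall>w. nonneg_vec w \<longrightarrow>
          (\<lambda>n. phi_inf C (Ln n) w) \<longlonglongrightarrow> phi_inf C L w))"
proof (intro conjI allI impI; elim conjE)
  fix Cs :: "nat \<Rightarrow> real^'d \<Rightarrow> real" and w0 :: real and w :: "real^'d"
  assume "\<forall>n. copula (Cs n)" "\<forall>u. unit_cube u \<longrightarrow> (\<lambda>n. Cs n u) \<longlonglongrightarrow> C u" "nonneg_vec w"
  then show "(\<lambda>n. phi_fin (Cs n) w0 L w) \<longlonglongrightarrow> phi_fin C w0 L w"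
    using L C by (intro phi_fin_tendsto_copula) auto
next
  fix Ls :: "nat \<Rightarrow> 'd \<Rightarrow> real \<Rightarrow> real \<Rightarrow> real" and w0 :: real and w :: "real^'d"
  assume "\<forall>n i. Ls n i \<in> M2" "\<forall>i t w. 0 \<le> t \<and> 0 \<le> w \<longrightarrow> (\<lambda>n. Ls n i t w) \<longlonglongrightarrow> L i t w"
    "nonneg_vec w"
  then show "(\<lambda>n. phi_fin C w0 (Ls n) w) \<longlonglongrightarrow> phi_fin C w0 L w"
    using L C by (intro phi_fin_tendsto_tail_dependence) auto
next
  fix Ls :: "nat \<Rightarrow> 'd \<Rightarrow> real \<Rightarrow> real \<Rightarrow> real" and w :: "real^'d"
  assume "\<forall>n i. Ls n i \<in> M2" "nonneg_vec w"
    "\<forall>i w. 0 \<le> w \<longrightarrow>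
      (\<lambda>n. \<integral>\<^sup>+ t \<in> {0..}. ennreal \<bar>part1 (Ls n i) t w - part1 (L i) t w\<bar> \<partial>lebesgue) \<longlonglongrightarrow> 0"
  then show "(\<lambda>n. phi_inf C (Ls n) w) \<longlonglongrightarrow> phi_inf C L w"
    using L C by (intro phi_inf_tendsto_L1) auto
qed

end
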